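(* Let $S=\{(X_m,y_m)\}_{m=1}^T\in\mathcal{S}_T$ with $\operatorname{rank}(X_m)=d-1$ for all $m$, and let $v_m$ be a unit vector spanning $\ker X_m$. Let $\tau$ be any ordering and $k\ge2$. For $i,j\in\{1,\dots,k\}$ let $\theta_{i,j}\in[0,\pi/2]$ satisfy $\cos^2\theta_{i,j}=(v_{\tau(i)}^\top v_{\tau(j)})^2$. Then $$F_{\tau,S}(k)\ge\min_{m}\sigma_{\min}^2(X_m)\,(v_{\tau(1)}^\top w^\star)^2\,\frac1k\Big(\prod_{i=1}^{k-1}\cos^2\theta_{i,i+1}\Big)\sum_{j=1}^{k-1}\big(1-\cos^2\theta_{j,k}\big),$$ where $\sigma_{\min}(X_m)$ is the smallest non-zero singular value of $X_m$.
   Context: Let $d\ge 1$, $T\ge1$. A task is a pair $(X_m,y_m)$ with $X_m\in\mathbb{R}^{n_m\times d}$, $y_m\in\mathbb{R}^{n_m}$ and $\operatorname{rank}(X_m)<d$. $\mathcal{S}_T$ denotes the set of collections $S=\{(X_m,y_m)\}_{m=1}^T$ of $T$ tasks such that $\|X_m\|\le 1$ (spectral norm) for all $m$ and there exists $w\in\mathbb{R}^d$ with $\|w\|\le 1$ and $y_m=X_mw$ for all $m$. Given $S$ and an ordering $\tau:\mathbb{N}^+\to\{1,\dots,T\}$, the iterates are $w_0=0$ and $w_t=w_{t-1}+X_{\tau(t)}^+(y_{\tau(t)}-X_{\tau(t)}w_{t-1})$, with $A^+$ the Moore–Penrose pseudoinverse. The forgetting at iteration $k$ is $F_{\tau,S}(k)=\frac1k\sum_{t=1}^k\|X_{\tau(t)}w_k-y_{\tau(t)}\|^2$.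 $w^\star$ denotes the minimum Euclidean-norm vector with $X_mw^\star=y_m$ for all $m$. *)

theory Defs
  imports "HOL-Analysis.Analysis" "Jordan_Normal_Form.DL_Rank" "Jordan_Normal_Form.Char_Poly"
begin

definition vnorm :: "real vec \<Rightarrow> real" where
  "vnorm x = sqrt (x \<bullet> x)"

definition spec_norm_le :: "real mat \<Rightarrow> real \<Rightarrow> bool" where
  "spec_norm_le A c \<longleftrightarrow> (\<forall>x \<in> carrier_vec (dim_col A). vnorm (A *\<^sub>v x) \<le> c * vnorm x)"

definition mrank :: "real mat \<Rightarrow> nat" where
  "mrank A = vec_space.rank (dim_row A) A"

definition pinv :: "real mat \<Rightarrow> real mat" where
  "pinv A = (THE B. B \<in> carrier_mat (dim_col A) (dim_row A) \<and>
       A * B * A = A \<and> B * A * B = B \<and>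
       transpose_mat (A * B) = A * B \<and> transpose_mat (B * A) = B * A)"

definition sigma_min :: "real mat \<Rightarrow> real" where
  "sigma_min A = sqrt (Min {e. eigenvalue (transpose_mat A * A) e \<and> e \<noteq> 0})"

fun iterate :: "nat \<Rightarrow> (nat \<Rightarrow> real mat) \<Rightarrow> (nat \<Rightarrow> real vec) \<Rightarrow> (nat \<Rightarrow> nat) \<Rightarrow> nat \<Rightarrow> real vec" where
  "iterate d X y \<tau> 0 = 0\<^sub>v d"
| "iterate d X y \<tau> (Suc t) =
     iterate d X y \<tau> t + pinv (X (\<tau> (Suc t))) *\<^sub>v
       (y (\<tau> (Suc t)) - X (\<tau> (Suc t)) *\<^sub>v iterate d X y \<tau> t)"

definition forgetting :: "nat \<Rightarrow> (nat \<Rightarrow> real mat) \<Rightarrow> (nat \<Rightarrow> real vec) \<Rightarrow> (nat \<Rightarrow> nat) \<Rightarrow> nat \<Rightarrow> real" where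
  "forgetting d X y \<tau> k = (1 / real k) * (\<Sum>t = 1..k.
      (vnorm (X (\<tau> t) *\<^sub>v iterate d X y \<tau> k - y (\<tau> t)))^2)"

definition in_S_T :: "nat \<Rightarrow> nat \<Rightarrow> (nat \<Rightarrow> real mat) \<Rightarrow> (nat \<Rightarrow> real vec) \<Rightarrow> bool" where
  "in_S_T d T X y \<longleftrightarrow>
     (\<forall>m \<in> {1..T}. dim_col (X m) = d \<and> y m \<in> carrier_vec (dim_row (X m)) \<and>
                   mrank (X m) < d \<and> spec_norm_le (X m) 1) \<and>
     (\<exists>w \<in> carrier_vec d. vnorm w \<le> 1 \<and> (\<forall>m \<in> {1..T}. y m = X m *\<^sub>v w))"

definition is_min_norm_sol :: "nat \<Rightarrow> nat \<Rightarrow> (nat \<Rightarrow> real mat) \<Rightarrow> (nat \<Rightarrow> real vec) \<Rightarrow> real vec \<Rightarrow> bool" where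
  "is_min_norm_sol d T X y w \<longleftrightarrow> w \<in> carrier_vec d \<and> (\<forall>m \<in> {1..T}. X m *\<^sub>v w = y m) \<and>
     (\<forall>u \<in> carrier_vec d. (\<forall>m \<in> {1..T}. X m *\<^sub>v u = y m) \<longrightarrow> vnorm w \<le> vnorm u)"

end

theory Submission
  imports Defs
begin

text \<open>The kernel of each task matrix \<open>X\<^sub>m\<close> is the line spanned by the unit vector \<open>v\<^sub>m\<close>, so
  \<open>X\<^sub>m\<^sup>+ X\<^sub>m\<close> is the orthogonal projection onto the hyperplane orthogonal to \<open>v\<^sub>m\<close>, and one step
  of the iteration replaces the error \<open>w\<^sub>t - w\<^sup>\<star>\<close> by its component along the kernel line of the
  current task. Inductively \<open>w\<^sub>k - w\<^sup>\<star> = a v\<^sub>\<tau>\<^sub>(\<^sub>k\<^sub>)\<close>, where \<open>a\<^sup>2\<close> is \<open>(v\<^sub>\<tau>\<^sub>(\<^sub>1\<^sub>) \<bullet> w\<^sup>\<star>)\<^sup>2\<close> times the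
  product of the squared cosines between consecutive kernel lines. The residual of task \<open>\<tau>(t)\<close>
  at \<open>w\<^sub>k\<close> is \<open>\<parallel>X (w\<^sub>k - w\<^sup>\<star>)\<parallel>\<^sup>2\<close>. Minimising the Rayleigh quotient of \<open>X\<^sup>T X\<close> on the hyperplane
  orthogonal to the kernel yields a nonzero eigenvalue, so this residual is at least \<open>\<sigma>\<^sub>m\<^sub>i\<^sub>n\<^sup>2\<close>
  times the squared distance of \<open>w\<^sub>k - w\<^sup>\<star>\<close> from the kernel line of task \<open>\<tau>(t)\<close>, that is
  \<open>\<sigma>\<^sub>m\<^sub>i\<^sub>n\<^sup>2 a\<^sup>2 (1 - cos\<^sup>2 \<theta>\<^sub>t\<^sub>,\<^sub>k)\<close>. Summing over \<open>t < k\<close> gives the bound.\<close>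

lemma assoc_mult_mat_dims:
  "dim_col A = dim_row B \<Longrightarrow> dim_col B = dim_row C \<Longrightarrow>
   A * B * C = A * (B * (C :: 'a :: comm_semiring_0 mat))"
  by (rule assoc_mult_mat[of A "dim_row A" "dim_col A" B "dim_col B" C "dim_col C"]) auto

lemma transpose_mult_dims:
  "dim_col A = dim_row B \<Longrightarrow>
   transpose_mat (A * B) = transpose_mat B * transpose_mat (A :: 'a :: comm_semiring_0 mat)"
  by (rule transpose_mult[of A "dim_row A" "dim_col A" B "dim_col B"]) auto

lemma assoc_mult_mat_vec_dims:
  "dim_col A = dim_row B \<Longrightarrow> dim_col B = dim_vec x \<Longrightarrow>
   (A * B) *\<^sub>v x = A *\<^sub>v (B *\<^sub>v (x :: 'a :: comm_semiring_0 vec))"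
  by (rule assoc_mult_mat_vec[of A "dim_row A" "dim_col A" B "dim_col B" x]) auto

lemma mat_eq_by_mult_vecI:
  assumes A: "A \<in> carrier_mat r c" and B: "B \<in> carrier_mat r c"
    and eq: "\<And>x. x \<in> carrier_vec c \<Longrightarrow> A *\<^sub>v x = B *\<^sub>v (x :: 'a :: semiring_1 vec)"
  shows "A = B"
proof (rule eq_matI)
  fix i j assume i: "i < dim_row B" and j: "j < dim_col B"
  have "(A *\<^sub>v unit_vec c j) $ i = (B *\<^sub>v unit_vec c j) $ i" using eq[of "unit_vec c j"] by simp
  then show "A $$ (i, j) = B $$ (i, j)" using A B i j by simp
qed (use A B in auto)

lemma mult_mat_vec_zero: "A \<in> carrier_mat r c \<Longrightarrow> A *\<^sub>v 0\<^sub>v c = (0\<^sub>v r :: 'a :: semiring_0 vec)"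
  by (intro eq_vecI) auto

lemma minus_eq_if_eq_add_vec:
  fixes a b x :: "'a :: ab_group_add vec"
  assumes "x = a + b" "a \<in> carrier_vec n" "b \<in> carrier_vec n"
  shows "x - b = a"
  using assms by (intro eq_vecI) auto

lemma scalar_prod_self_nonneg: "0 \<le> (x :: real vec) \<bullet> x"
  using conjugate_square_ge_0_vec[of x] by simp

lemma scalar_prod_self_eq_0_iff: "x \<in> carrier_vec n \<Longrightarrow> (x :: real vec) \<bullet> x = 0 \<longleftrightarrow> x = 0\<^sub>v n"
  using conjugate_square_eq_0_vec[of x n] by simp

lemma vnorm_sq: "(vnorm x)\<^sup>2 = x \<bullet> x"
  unfolding vnorm_def using scalar_prod_self_nonneg[of x] by simp

lemma scalar_prod_smult_self: "(c \<cdot>\<^sub>v x) \<bullet> (c \<cdot>\<^sub>v x) = c\<^sup>2 * ((x :: real vec) \<bullet> x)"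
  unfolding scalar_prod_def by (simp add: sum_distrib_left power2_eq_square algebra_simps)

lemma scalar_prod_add_smult_self:
  assumes "a \<in> carrier_vec n" "b \<in> carrier_vec n"
  shows "(a + t \<cdot>\<^sub>v b) \<bullet> (a + t \<cdot>\<^sub>v b) = a \<bullet> a + 2 * t * (a \<bullet> b) + t\<^sup>2 * (b \<bullet> (b :: real vec))"
proof -
  have "(a + t \<cdot>\<^sub>v b) \<bullet> (a + t \<cdot>\<^sub>v b) =
      (\<Sum>i\<in>{0..<n}. a$i * a$i + 2 * t * (a$i * b$i) + t\<^sup>2 * (b$i * b$i))"
    unfolding scalar_prod_def using assms
    by (intro sum.cong) (auto simp: algebra_simps power2_eq_square)
  then show ?thesis
    unfolding scalar_prod_def using assms by (simp add: sum.distrib sum_distrib_left)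
qed

lemma scalar_prod_orth_residual:
  fixes v x :: "real vec"
  assumes "v \<in> carrier_vec n" "x \<in> carrier_vec n" "v \<bullet> v = 1"
  shows "v \<bullet> (x - (v \<bullet> x) \<cdot>\<^sub>v v) = 0"
  using assms by (simp add: scalar_prod_minus_distrib[of _ n])

lemma sq_norm_orth_residual:
  fixes v x :: "real vec"
  assumes v: "v \<in> carrier_vec n" and x: "x \<in> carrier_vec n" and "v \<bullet> v = 1"
  shows "(x - (v \<bullet> x) \<cdot>\<^sub>v v) \<bullet> (x - (v \<bullet> x) \<cdot>\<^sub>v v) = x \<bullet> x - (v \<bullet> x)\<^sup>2"
proof -
  have "x - (v \<bullet> x) \<cdot>\<^sub>v v = x + (- (v \<bullet> x)) \<cdot>\<^sub>v v" using v x by auto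
  moreover have "x \<bullet> v = v \<bullet> x" using comm_scalar_prod[OF x v] .
  ultimately show ?thesis
    using scalar_prod_add_smult_self[OF x v, of "- (v \<bullet> x)"] assms by (simp add: power2_eq_square)
qed

lemma sq_scalar_prod_unit_le:
  fixes v x :: "real vec"
  assumes "v \<in> carrier_vec n" "x \<in> carrier_vec n" "v \<bullet> v = 1"
  shows "(v \<bullet> x)\<^sup>2 \<le> x \<bullet> x"
  using sq_norm_orth_residual[OF assms] scalar_prod_self_nonneg[of "x - (v \<bullet> x) \<cdot>\<^sub>v v"] by simp

lemma linear_coeff_zero_if_quadratic_nonneg:
  assumes "\<forall>t::real. 0 \<le> 2 * t * b + t\<^sup>2 * c"
  shows "b = 0"
proof (rule ccontr)
  assume b: "b \<noteq> 0"
  define s where "s = 1 / (\<bar>c\<bar> + 1)"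
  have s: "s > 0" "s * \<bar>c\<bar> < 1" unfolding s_def by (auto simp: field_simps)
  have "0 \<le> 2 * (- s * b) * b + (- s * b)\<^sup>2 * c" using assms by blast
  hence "b\<^sup>2 * s * (s * c - 2) \<ge> 0" by (simp add: algebra_simps power2_eq_square)
  moreover have "s * c - 2 < 0" using s by (smt (verit) abs_ge_self mult_left_mono)
  moreover have "b\<^sup>2 * s > 0" using b s by simp
  ultimately show False using mult_pos_neg[of "b\<^sup>2 * s" "s * c - 2"] by linarith
qed

subsection \<open>The Moore--Penrose pseudoinverse\<close>

lemma penrose_left_factor:
  fixes A B C :: "real mat"
  assumes A: "A \<in> carrier_mat n d" and B: "B \<in> carrier_mat d n" and C: "C \<in> carrier_mat d n"
    and B2: "B * A * B = B" and B3: "transpose_mat (A * B) = A * B"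
    and C1: "A * C * A = A" and C3: "transpose_mat (A * C) = A * C"
  shows "B = B * A * C"
proof -
  have "transpose_mat A = transpose_mat (A * C * A)" using C1 by simp
  also have "\<dots> = transpose_mat A * (A * C)" using A C C3 by (simp add: transpose_mult_dims)
  finally have At: "transpose_mat A = transpose_mat A * (A * C)" .
  have "transpose_mat (A * B) = transpose_mat B * transpose_mat A" using A B by (simp add: transpose_mult_dims)
  also have "\<dots> = transpose_mat B * (transpose_mat A * (A * C))" using At by simp
  also have "\<dots> = transpose_mat (A * B) * (A * C)" using A B C by (simp add: transpose_mult_dims assoc_mult_mat_dims)
  finally have AB: "A * B = A * B * (A * C)" using B3 by simp
  have "B = B * (A * B)" using B2 A B by (simp add: assoc_mult_mat_dims)
  also have "\<dots> = B * (A * B * (A * C))" using AB by simp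
  also have "\<dots> = B * A * B * A * C" using A B C by (simp add: assoc_mult_mat_dims)
  finally show ?thesis using B2 by simp
qed

lemma penrose_right_factor:
  fixes A B C :: "real mat"
  assumes A: "A \<in> carrier_mat n d" and B: "B \<in> carrier_mat d n" and C: "C \<in> carrier_mat d n"
    and B1: "A * B * A = A" and B4: "transpose_mat (B * A) = B * A"
    and C2: "C * A * C = C" and C4: "transpose_mat (C * A) = C * A"
  shows "C = B * A * C"
proof -
  have "transpose_mat A = transpose_mat (A * B * A)" using B1 by simp
  also have "\<dots> = B * A * transpose_mat A" using A B B4 by (simp add: transpose_mult_dims assoc_mult_mat_dims)
  finally have At: "transpose_mat A = B * A * transpose_mat A" .
  have "transpose_mat (C * A) = transpose_mat A * transpose_mat C" using A C by (simp add: transpose_mult_dims)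
  also have "\<dots> = B * A * transpose_mat A * transpose_mat C" using At by simp
  also have "\<dots> = B * A * transpose_mat (C * A)" using A B C by (simp add: transpose_mult_dims assoc_mult_mat_dims)
  finally have CA: "C * A = B * A * (C * A)" using C4 by simp
  have "C = C * A * C" using C2 by simp
  also have "\<dots> = B * A * (C * A) * C" using CA by simp
  also have "\<dots> = B * A * (C * A * C)" using A B C by (simp add: assoc_mult_mat_dims)
  finally show ?thesis using C2 by simp
qed

lemma penrose_conditions_unique:
  fixes A B C :: "real mat"
  assumes A: "A \<in> carrier_mat n d" and B: "B \<in> carrier_mat d n" and C: "C \<in> carrier_mat d n"
    and "A * B * A = A" "B * A * B = B" "transpose_mat (A * B) = A * B" "transpose_mat (B * A) = B * A"
    and "A * C * A = A" "C * A * C = C" "transpose_mat (A * C) = A * C" "transpose_mat (C * A) = C * A"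
  shows "B = C"
  using penrose_left_factor[OF A B C] penrose_right_factor[OF A B C] assms by simp

definition outer_mat :: "nat \<Rightarrow> 'a :: comm_semiring_0 vec \<Rightarrow> 'a mat" where
  "outer_mat d v = mat d d (\<lambda>(i, j). v $ i * v $ j)"

lemma outer_mat_carrier [simp]: "outer_mat d v \<in> carrier_mat d d"
  unfolding outer_mat_def by simp

lemma outer_mat_mult_vec:
  "v \<in> carrier_vec d \<Longrightarrow> x \<in> carrier_vec d \<Longrightarrow> outer_mat d v *\<^sub>v x = (v \<bullet> x) \<cdot>\<^sub>v v"
  by (intro eq_vecI)
    (auto simp: outer_mat_def scalar_prod_def mult_ac, simp add: sum_distrib_left)

lemma transpose_outer_mat [simp]: "transpose_mat (outer_mat d v) = outer_mat d v"
  by (intro eq_matI) (auto simp: outer_mat_def ac_simps)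

lemma orth_proj_mult_vec:
  "v \<in> carrier_vec d \<Longrightarrow> x \<in> carrier_vec d \<Longrightarrow>
   (1\<^sub>m d - outer_mat d v) *\<^sub>v x = x - (v \<bullet> x) \<cdot>\<^sub>v (v :: 'a :: comm_ring_1 vec)"
  by (simp add: minus_mult_distrib_mat_vec[of _ d d] outer_mat_mult_vec)

locale line_kernel =
  fixes X :: "real mat" and n d :: nat and v :: "real vec"
  assumes X_carrier: "X \<in> carrier_mat n d"
    and v_carrier: "v \<in> carrier_vec d" and v_unit: "v \<bullet> v = 1"
    and kernel_iff: "\<And>x. x \<in> carrier_vec d \<Longrightarrow> X *\<^sub>v x = 0\<^sub>v n \<longleftrightarrow> (\<exists>c. x = c \<cdot>\<^sub>v v)"
begin

lemma mult_v_eq_0: "X *\<^sub>v v = 0\<^sub>v n"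
  using kernel_iff[OF v_carrier] v_carrier by (metis one_smult_vec)

lemma mult_minus_smult_v: "x \<in> carrier_vec d \<Longrightarrow> X *\<^sub>v (x - c \<cdot>\<^sub>v v) = X *\<^sub>v x"
  using X_carrier v_carrier mult_v_eq_0
  by (simp add: mult_minus_distrib_mat_vec[of _ n d] mult_mat_vec[of _ n d]) (intro eq_vecI, auto)

lemma shifted_gram_mult_vec:
  "x \<in> carrier_vec d \<Longrightarrow>
   (transpose_mat X * X + outer_mat d v) *\<^sub>v x = transpose_mat X *\<^sub>v (X *\<^sub>v x) + (v \<bullet> x) \<cdot>\<^sub>v v"
  using X_carrier v_carrier
  by (simp add: add_mult_distrib_mat_vec[of _ d d] assoc_mult_mat_vec_dims outer_mat_mult_vec)

text \<open>Adding \<open>v v\<^sup>T\<close> makes the Gram matrix positive definite; the pseudoinverse is then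
  \<open>(X\<^sup>T X + v v\<^sup>T)\<^sup>-\<^sup>1 X\<^sup>T\<close>.\<close>

lemma shifted_gram_inverse:
  obtains M' where "M' \<in> carrier_mat d d" "M' * (transpose_mat X * X + outer_mat d v) = 1\<^sub>m d"
    "transpose_mat M' = M'" "M' *\<^sub>v v = v"
proof -
  define M where "M = transpose_mat X * X + outer_mat d v"
  have M: "M \<in> carrier_mat d d" unfolding M_def using X_carrier by simp
  have Mx: "M *\<^sub>v x = transpose_mat X *\<^sub>v (X *\<^sub>v x) + (v \<bullet> x) \<cdot>\<^sub>v v" if "x \<in> carrier_vec d" for x
    unfolding M_def using shifted_gram_mult_vec[OF that] .
  have "x = 0\<^sub>v d" if x: "x \<in> carrier_vec d" and Mx0: "M *\<^sub>v x = 0\<^sub>v d" for x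
  proof -
    have "x \<bullet> (M *\<^sub>v x) = (X *\<^sub>v x) \<bullet> (X *\<^sub>v x) + (v \<bullet> x)\<^sup>2"
      using Mx[OF x] x v_carrier X_carrier transpose_vec_mult_scalar[of X n d x "X *\<^sub>v x"]
      by (simp add: scalar_prod_add_distrib[of _ d] comm_scalar_prod[of x d] power2_eq_square)
    hence "(X *\<^sub>v x) \<bullet> (X *\<^sub>v x) = 0" "v \<bullet> x = 0"
      using Mx0 x scalar_prod_self_nonneg[of "X *\<^sub>v x"] by (auto simp: add_nonneg_eq_0_iff)
    then obtain c where c: "x = c \<cdot>\<^sub>v v"
      using kernel_iff[OF x] scalar_prod_self_eq_0_iff[of "X *\<^sub>v x" n] X_carrier x by auto
    then show ?thesis using \<open>v \<bullet> x = 0\<close> v_carrier v_unit by auto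
  qed
  hence "det M \<noteq> 0" using det_0_iff_vec_prod_zero_field[OF M] by auto
  from det_non_zero_imp_unit[OF M this, of undefined]
  obtain M' where M': "M' \<in> carrier_mat d d" and M'M: "M' * M = 1\<^sub>m d" and MM': "M * M' = 1\<^sub>m d"
    unfolding Units_def ring_mat_def by auto
  have "transpose_mat M = M"
    unfolding M_def using X_carrier by (simp add: transpose_add[of _ d d] transpose_mult_dims)
  hence "transpose_mat M' * M = 1\<^sub>m d"
    using MM' M M' by (metis transpose_mult_dims transpose_one carrier_matD(1,2))
  moreover have "transpose_mat M' = transpose_mat M' * (M * M')" using MM' M' by simp
  ultimately have sym: "transpose_mat M' = M'"
    using assoc_mult_mat[of "transpose_mat M'" d d M d M' d] M M' by simp
  have "M *\<^sub>v v = v"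
    using Mx[OF v_carrier] mult_v_eq_0 v_unit v_carrier X_carrier by auto
  hence "M' *\<^sub>v v = v" using arg_cong[OF M'M, of "\<lambda>A. A *\<^sub>v v"] M M' v_carrier by simp
  then show thesis using that M' M'M sym unfolding M_def by blast
qed

lemma projecting_left_inverse:
  obtains B :: "real mat" where "B \<in> carrier_mat d n" "B * X = 1\<^sub>m d - outer_mat d v"
    "transpose_mat (X * B) = X * B" "\<And>z. z \<in> carrier_vec n \<Longrightarrow> v \<bullet> (B *\<^sub>v z) = 0"
proof -
  obtain M' where M': "M' \<in> carrier_mat d d" and M'M: "M' * (transpose_mat X * X + outer_mat d v) = 1\<^sub>m d"
    and sym: "transpose_mat M' = M'" and M'v: "M' *\<^sub>v v = v"
    using shifted_gram_inverse .
  define B where "B = M' * transpose_mat X"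
  have B: "B \<in> carrier_mat d n" unfolding B_def using M' X_carrier by simp
  have "B * X = 1\<^sub>m d - outer_mat d v"
  proof (rule mat_eq_by_mult_vecI[of _ d d])
    fix x :: "real vec" assume x: "x \<in> carrier_vec d"
    have Gx: "transpose_mat X *\<^sub>v (X *\<^sub>v x) \<in> carrier_vec d" using X_carrier x by simp
    have "x = (M' * (transpose_mat X * X + outer_mat d v)) *\<^sub>v x" using M'M x by simp
    also have "\<dots> = M' *\<^sub>v (transpose_mat X *\<^sub>v (X *\<^sub>v x) + (v \<bullet> x) \<cdot>\<^sub>v v)"
      using M' X_carrier x
      by (subst assoc_mult_mat_vec[of M' d d _ d]) (auto simp: shifted_gram_mult_vec)
    also have "\<dots> = (B * X) *\<^sub>v x + (v \<bullet> x) \<cdot>\<^sub>v v"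
      unfolding B_def using M' X_carrier x v_carrier M'v Gx
      by (simp add: mult_add_distrib_mat_vec[of _ d d] mult_mat_vec[of _ d d] assoc_mult_mat_vec_dims)
    finally have "x = (B * X) *\<^sub>v x + (v \<bullet> x) \<cdot>\<^sub>v v" .
    then show "(B * X) *\<^sub>v x = (1\<^sub>m d - outer_mat d v) *\<^sub>v x"
      unfolding orth_proj_mult_vec[OF v_carrier x]
      by (rule minus_eq_if_eq_add_vec[symmetric]) (use B X_carrier x v_carrier in auto)
  qed (use B X_carrier minus_carrier_mat[OF outer_mat_carrier] in auto)
  moreover have "transpose_mat (X * B) = X * B"
    unfolding B_def using X_carrier M' sym by (simp add: transpose_mult_dims assoc_mult_mat_dims)
  moreover have "v \<bullet> (B *\<^sub>v z) = 0" if z: "z \<in> carrier_vec n" for z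
  proof -
    have XTz: "transpose_mat X *\<^sub>v z \<in> carrier_vec d" using X_carrier z by simp
    have "v \<bullet> (B *\<^sub>v z) = (transpose_mat M' *\<^sub>v v) \<bullet> (transpose_mat X *\<^sub>v z)"
      unfolding B_def using M' X_carrier z v_carrier transpose_vec_mult_scalar[OF M' XTz v_carrier]
      by (simp add: assoc_mult_mat_vec_dims)
    also have "\<dots> = z \<bullet> (X *\<^sub>v v)"
      using sym M'v X_carrier z v_carrier transpose_vec_mult_scalar[OF X_carrier v_carrier z]
      by (simp add: comm_scalar_prod[of v d])
    finally show ?thesis using mult_v_eq_0 z by simp
  qed
  ultimately show thesis using that B by blast
qed

lemma penrose_witness:
  "\<exists>B. B \<in> carrier_mat d n \<and> X * B * X = X \<and> B * X * B = B \<and>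
     transpose_mat (X * B) = X * B \<and> transpose_mat (B * X) = B * X"
proof -
  obtain B :: "real mat" where B: "B \<in> carrier_mat d n" and BX: "B * X = 1\<^sub>m d - outer_mat d v"
    and sym: "transpose_mat (X * B) = X * B" and orth: "\<And>z. z \<in> carrier_vec n \<Longrightarrow> v \<bullet> (B *\<^sub>v z) = 0"
    using projecting_left_inverse by blast
  have P: "1\<^sub>m d - outer_mat d v \<in> carrier_mat d d" by (rule minus_carrier_mat[OF outer_mat_carrier])
  have "X * B * X = X"
  proof (rule mat_eq_by_mult_vecI[of _ n d])
    fix x :: "real vec" assume x: "x \<in> carrier_vec d"
    have "(X * B * X) *\<^sub>v x = X *\<^sub>v (x - (v \<bullet> x) \<cdot>\<^sub>v v)"
      using BX X_carrier B P x orth_proj_mult_vec[OF v_carrier x]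
      by (simp add: assoc_mult_mat_dims assoc_mult_mat_vec_dims)
    then show "(X * B * X) *\<^sub>v x = X *\<^sub>v x" using mult_minus_smult_v[OF x] by simp
  qed (use X_carrier B in auto)
  moreover have "B * X * B = B"
  proof (rule mat_eq_by_mult_vecI[of _ d n])
    fix z :: "real vec" assume z: "z \<in> carrier_vec n"
    have Bz: "B *\<^sub>v z \<in> carrier_vec d" using B z by simp
    then show "(B * X * B) *\<^sub>v z = B *\<^sub>v z"
      using BX X_carrier B P z orth_proj_mult_vec[OF v_carrier Bz] orth[OF z] v_carrier
      by (simp add: assoc_mult_mat_vec_dims) (intro eq_vecI, auto)
  qed (use X_carrier B in auto)
  moreover have "transpose_mat (B * X) = B * X"
    unfolding BX by (simp add: transpose_minus[of _ d d])
  ultimately show ?thesis using B sym by blast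
qed

lemma pinv_penrose:
  "pinv X \<in> carrier_mat d n \<and> X * pinv X * X = X \<and> pinv X * X * pinv X = pinv X \<and>
   transpose_mat (X * pinv X) = X * pinv X \<and> transpose_mat (pinv X * X) = pinv X * X"
proof -
  have "\<exists>!B. B \<in> carrier_mat (dim_col X) (dim_row X) \<and> X * B * X = X \<and> B * X * B = B \<and>
      transpose_mat (X * B) = X * B \<and> transpose_mat (B * X) = B * X"
    using penrose_witness penrose_conditions_unique[OF X_carrier] X_carrier by auto
  from theI'[OF this] show ?thesis unfolding pinv_def using X_carrier by auto
qed

lemma pinv_carrier: "pinv X \<in> carrier_mat d n"
  using pinv_penrose by blast

lemma pinv_mult_mult_vec:
  assumes x: "x \<in> carrier_vec d"
  shows "pinv X *\<^sub>v (X *\<^sub>v x) = x - (v \<bullet> x) \<cdot>\<^sub>v v"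
proof -
  define p where "p = pinv X *\<^sub>v (X *\<^sub>v x)"
  have p: "p \<in> carrier_vec d" unfolding p_def using pinv_carrier X_carrier x by simp
  have "X *\<^sub>v p = (X * pinv X * X) *\<^sub>v x"
    unfolding p_def using X_carrier pinv_carrier x by (simp add: assoc_mult_mat_vec_dims)
  hence "X *\<^sub>v (x - p) = 0\<^sub>v n"
    using pinv_penrose X_carrier x p by (simp add: mult_minus_distrib_mat_vec[of _ n d])
  then obtain c where c: "x - p = c \<cdot>\<^sub>v v" using kernel_iff x p by auto
  have "v \<bullet> p = (transpose_mat (pinv X * X) *\<^sub>v v) \<bullet> x"
    unfolding p_def using X_carrier pinv_carrier x v_carrier
      transpose_vec_mult_scalar[of "pinv X * X" d d x v]
    by (simp add: assoc_mult_mat_vec_dims)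
  also have "\<dots> = 0"
    using pinv_penrose X_carrier pinv_carrier x v_carrier mult_v_eq_0
    by (simp add: assoc_mult_mat_vec_dims mult_mat_vec_zero[OF pinv_carrier])
  finally have "v \<bullet> (x - p) = v \<bullet> x" using x p v_carrier by (simp add: scalar_prod_minus_distrib[of _ d])
  hence "c = v \<bullet> x" using c v_carrier v_unit by simp
  hence "x = p + (v \<bullet> x) \<cdot>\<^sub>v v" using c x p v_carrier by (intro eq_vecI) (auto simp: vec_eq_iff)
  then show ?thesis unfolding p_def[symmetric]
    by (rule minus_eq_if_eq_add_vec[symmetric]) (use p v_carrier in auto)
qed

end

subsection \<open>Least nonzero eigenvalue of the Gram matrix\<close>

lemma continuous_on_coordinate: "continuous_on S (\<lambda>x :: nat \<Rightarrow> real. x i)"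
  by (rule continuous_on_subset[OF continuous_on_product_coordinates]) simp

text \<open>Vectors of length \<open>d\<close> are identified with functions \<open>nat \<Rightarrow> real\<close> vanishing from \<open>d\<close> on,
  where the product topology provides compactness of the unit sphere.\<close>

lemma unit_sphere_slice_attains_inf:
  fixes F G :: "(nat \<Rightarrow> real) \<Rightarrow> real"
  assumes F: "continuous_on UNIV F" and G: "continuous_on UNIV G"
    and nonempty: "\<exists>g. (\<forall>i\<ge>d. g i = 0) \<and> (\<Sum>i<d. (g i)\<^sup>2) = 1 \<and> G g = 0"
  shows "\<exists>g0. ((\<forall>i\<ge>d. g0 i = 0) \<and> (\<Sum>i<d. (g0 i)\<^sup>2) = 1 \<and> G g0 = 0) \<and>
    (\<forall>g. (\<forall>i\<ge>d. g i = 0) \<and> (\<Sum>i<d. (g i)\<^sup>2) = 1 \<and> G g = 0 \<longrightarrow> F g0 \<le> F g)"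
proof -
  define S :: "nat \<Rightarrow> real set" where "S = (\<lambda>i. if i < d then {-1..1} else {0})"
  have "compactin (product_topology (\<lambda>i. euclidean) UNIV) (PiE UNIV S)"
    unfolding compactin_PiE S_def by auto
  hence box: "compact (PiE UNIV S)" unfolding euclidean_product_topology by simp
  have sphere: "closed {g :: nat \<Rightarrow> real. (\<Sum>i<d. (g i)\<^sup>2) = 1}"
    by (rule closed_Collect_eq)
      (intro continuous_on_sum continuous_on_power continuous_on_coordinate continuous_on_const)+
  have zeros: "closed {g :: nat \<Rightarrow> real. G g = 0}"
    by (rule closed_Collect_eq) (rule G, rule continuous_on_const)
  define K where "K = PiE UNIV S \<inter> ({g. (\<Sum>i<d. (g i)\<^sup>2) = 1} \<inter> {g. G g = 0})"
  have "compact K" unfolding K_def using box sphere zeros by blast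
  have K_iff: "g \<in> K \<longleftrightarrow> (\<forall>i\<ge>d. g i = 0) \<and> (\<Sum>i<d. (g i)\<^sup>2) = 1 \<and> G g = 0" for g
  proof
    assume "g \<in> K" then show "(\<forall>i\<ge>d. g i = 0) \<and> (\<Sum>i<d. (g i)\<^sup>2) = 1 \<and> G g = 0"
      unfolding K_def S_def by (auto simp: PiE_iff) (metis not_le singletonD)
  next
    assume g: "(\<forall>i\<ge>d. g i = 0) \<and> (\<Sum>i<d. (g i)\<^sup>2) = 1 \<and> G g = 0"
    have "g i \<in> S i" for i
    proof (cases "i < d")
      case True
      have "(g i)\<^sup>2 \<le> (\<Sum>j<d. (g j)\<^sup>2)" using True by (intro member_le_sum) auto
      hence "\<bar>g i\<bar> \<le> 1" using g by (simp add: abs_square_le_1)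
      then show ?thesis using True unfolding S_def by auto
    qed (use g S_def in auto)
    then show "g \<in> K" unfolding K_def using g by (auto simp: PiE_iff)
  qed
  have "K \<noteq> {}" using nonempty K_iff by blast
  from continuous_attains_inf[OF \<open>compact K\<close> this continuous_on_subset[OF F]]
  show ?thesis using K_iff by blast
qed

lemma vec_restrict_eq: "x \<in> carrier_vec d \<Longrightarrow> vec d (\<lambda>i. if i < d then x $ i else 0) = x"
  by (intro eq_vecI) auto

lemma scalar_prod_vec_self:
  "(\<forall>i\<ge>d. g i = 0) \<Longrightarrow> vec d g \<bullet> vec d g = (\<Sum>i<d. (g i :: real)\<^sup>2)"
  unfolding scalar_prod_def lessThan_atLeast0 by (intro sum.cong) (auto simp: power2_eq_square)

lemma sq_norm_mult_attains_min_on_unit_orth: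
  fixes X :: "real mat" and v :: "real vec"
  assumes X: "X \<in> carrier_mat n d" and v: "v \<in> carrier_vec d"
    and nonempty: "\<exists>x\<in>carrier_vec d. x \<bullet> x = 1 \<and> v \<bullet> x = 0"
  shows "\<exists>x0\<in>carrier_vec d. x0 \<bullet> x0 = 1 \<and> v \<bullet> x0 = 0 \<and>
     (\<forall>x\<in>carrier_vec d. x \<bullet> x = 1 \<and> v \<bullet> x = 0 \<longrightarrow> (X *\<^sub>v x0) \<bullet> (X *\<^sub>v x0) \<le> (X *\<^sub>v x) \<bullet> (X *\<^sub>v x))"
proof -
  define F where "F = (\<lambda>g :: nat \<Rightarrow> real. (X *\<^sub>v vec d g) \<bullet> (X *\<^sub>v vec d g))"
  define G where "G = (\<lambda>g :: nat \<Rightarrow> real. v \<bullet> vec d g)"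
  have "F = (\<lambda>g. \<Sum>j\<in>{0..<n}. (\<Sum>i\<in>{0..<d}. X $$ (j, i) * g i) * (\<Sum>i\<in>{0..<d}. X $$ (j, i) * g i))"
    unfolding F_def using X by (intro ext) (simp add: scalar_prod_def row_def)
  hence F_cont: "continuous_on UNIV F"
    by (simp, intro continuous_on_sum continuous_on_mult continuous_on_const continuous_on_coordinate)
  have "G = (\<lambda>g. \<Sum>i\<in>{0..<d}. v $ i * g i)"
    unfolding G_def using v by (intro ext) (simp add: scalar_prod_def)
  hence G_cont: "continuous_on UNIV G"
    by (simp, intro continuous_on_sum continuous_on_mult continuous_on_const continuous_on_coordinate)
  define restr where "restr = (\<lambda>x :: real vec. \<lambda>i. if i < d then x $ i else 0)"
  have restr: "(\<forall>i\<ge>d. restr x i = 0) \<and> (\<Sum>i<d. (restr x i)\<^sup>2) = 1 \<and> G (restr x) = 0 \<and> vec d (restr x) = x"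
    if "x \<in> carrier_vec d" "x \<bullet> x = 1" "v \<bullet> x = 0" for x :: "real vec"
    using that vec_restrict_eq[of x d] scalar_prod_vec_self[of d "restr x"] unfolding G_def restr_def by auto
  obtain x :: "real vec" where "x \<in> carrier_vec d" "x \<bullet> x = 1" "v \<bullet> x = 0" using nonempty by blast
  hence "\<exists>g. (\<forall>i\<ge>d. g i = 0) \<and> (\<Sum>i<d. (g i)\<^sup>2) = 1 \<and> G g = 0" using restr by blast
  then obtain g0 where g0: "\<forall>i\<ge>d. g0 i = 0" "(\<Sum>i<d. (g0 i)\<^sup>2) = 1" "G g0 = 0"
    and g0_min: "\<forall>g. (\<forall>i\<ge>d. g i = 0) \<and> (\<Sum>i<d. (g i)\<^sup>2) = 1 \<and> G g = 0 \<longrightarrow> F g0 \<le> F g"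
    using unit_sphere_slice_attains_inf[OF F_cont G_cont] by blast
  show ?thesis
  proof (intro bexI conjI ballI impI)
    show "vec d g0 \<bullet> vec d g0 = 1" "v \<bullet> vec d g0 = 0"
      using g0 scalar_prod_vec_self[of d g0] unfolding G_def by auto
    fix x :: "real vec" assume "x \<in> carrier_vec d" "x \<bullet> x = 1 \<and> v \<bullet> x = 0"
    hence "F g0 \<le> F (restr x)" "vec d (restr x) = x" using g0_min restr[of x] by auto
    then show "(X *\<^sub>v vec d g0) \<bullet> (X *\<^sub>v vec d g0) \<le> (X *\<^sub>v x) \<bullet> (X *\<^sub>v x)"
      unfolding F_def by simp
  qed simp
qed

lemma exists_min_rayleigh_on_orth:
  fixes X :: "real mat" and v u :: "real vec"
  assumes X: "X \<in> carrier_mat n d" and v: "v \<in> carrier_vec d"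
    and u: "u \<in> carrier_vec d" "v \<bullet> u = 0" "u \<noteq> 0\<^sub>v d"
  obtains x0 :: "real vec" where "x0 \<in> carrier_vec d" "x0 \<bullet> x0 = 1" "v \<bullet> x0 = 0"
    "\<And>x. x \<in> carrier_vec d \<Longrightarrow> v \<bullet> x = 0 \<Longrightarrow> (X *\<^sub>v x0) \<bullet> (X *\<^sub>v x0) * (x \<bullet> x) \<le> (X *\<^sub>v x) \<bullet> (X *\<^sub>v x)"
proof -
  define f where "f = (\<lambda>x. (X *\<^sub>v x) \<bullet> (X *\<^sub>v x))"
  have normalize: "\<exists>x'\<in>carrier_vec d. x' \<bullet> x' = 1 \<and> v \<bullet> x' = 0 \<and> f x' = f x / (x \<bullet> x)"
    if x: "x \<in> carrier_vec d" "v \<bullet> x = 0" "x \<noteq> 0\<^sub>v d" for x :: "real vec"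
  proof (intro bexI conjI)
    have pos: "x \<bullet> x > 0"
      using scalar_prod_self_nonneg[of x] scalar_prod_self_eq_0_iff[OF x(1)] x(3) by linarith
    let ?x' = "(1 / sqrt (x \<bullet> x)) \<cdot>\<^sub>v x"
    show "?x' \<bullet> ?x' = 1" using pos by (simp add: scalar_prod_smult_self power_divide)
    show "v \<bullet> ?x' = 0" using x v by simp
    show "f ?x' = f x / (x \<bullet> x)"
      unfolding f_def using X x pos by (simp add: mult_mat_vec[of _ n d] scalar_prod_smult_self power_divide)
  qed (use x in simp)
  obtain x0 :: "real vec" where x0: "x0 \<in> carrier_vec d" "x0 \<bullet> x0 = 1" "v \<bullet> x0 = 0"
    and min: "\<forall>x\<in>carrier_vec d. x \<bullet> x = 1 \<and> v \<bullet> x = 0 \<longrightarrow> f x0 \<le> f x"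
    using sq_norm_mult_attains_min_on_unit_orth[OF X v] normalize[OF u] unfolding f_def by blast
  have "f x0 * (x \<bullet> x) \<le> f x" if x: "x \<in> carrier_vec d" "v \<bullet> x = 0" for x
  proof (cases "x = 0\<^sub>v d")
    case True then show ?thesis unfolding f_def using X by (simp add: mult_mat_vec_zero)
  next
    case False
    then obtain x' :: "real vec" where "x' \<in> carrier_vec d" "x' \<bullet> x' = 1" "v \<bullet> x' = 0" "f x' = f x / (x \<bullet> x)"
      using normalize[OF x] by blast
    moreover have "x \<bullet> x > 0"
      using scalar_prod_self_nonneg[of x] scalar_prod_self_eq_0_iff[OF x(1)] False by linarith
    ultimately have "f x0 \<le> f x / (x \<bullet> x)" "x \<bullet> x > 0" using min by auto
    then show ?thesis by (simp add: field_simps)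
  qed
  then show thesis using that x0 unfolding f_def by blast
qed

lemma min_rayleigh_first_order:
  fixes X :: "real mat" and v x0 h :: "real vec"
  assumes X: "X \<in> carrier_mat n d" and v: "v \<in> carrier_vec d"
    and x0: "x0 \<in> carrier_vec d" "x0 \<bullet> x0 = 1" "v \<bullet> x0 = 0"
    and min: "\<And>x. x \<in> carrier_vec d \<Longrightarrow> v \<bullet> x = 0 \<Longrightarrow>
       (X *\<^sub>v x0) \<bullet> (X *\<^sub>v x0) * (x \<bullet> x) \<le> (X *\<^sub>v x) \<bullet> (X *\<^sub>v x)"
    and h: "h \<in> carrier_vec d" "v \<bullet> h = 0"
  shows "(X *\<^sub>v x0) \<bullet> (X *\<^sub>v h) = (X *\<^sub>v x0) \<bullet> (X *\<^sub>v x0) * (x0 \<bullet> h)"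
proof -
  define \<mu> where "\<mu> = (X *\<^sub>v x0) \<bullet> (X *\<^sub>v x0)"
  have Xx0: "X *\<^sub>v x0 \<in> carrier_vec n" and Xh: "X *\<^sub>v h \<in> carrier_vec n" using X x0 h by auto
  have "0 \<le> 2 * t * ((X *\<^sub>v x0) \<bullet> (X *\<^sub>v h) - \<mu> * (x0 \<bullet> h)) + t\<^sup>2 * ((X *\<^sub>v h) \<bullet> (X *\<^sub>v h) - \<mu> * (h \<bullet> h))"
    for t
  proof -
    have "v \<bullet> (x0 + t \<cdot>\<^sub>v h) = 0" using v x0 h by (simp add: scalar_prod_add_distrib[of _ d])
    hence "\<mu> * ((x0 + t \<cdot>\<^sub>v h) \<bullet> (x0 + t \<cdot>\<^sub>v h)) \<le> (X *\<^sub>v (x0 + t \<cdot>\<^sub>v h)) \<bullet> (X *\<^sub>v (x0 + t \<cdot>\<^sub>v h))"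
      using min[of "x0 + t \<cdot>\<^sub>v h"] x0 h unfolding \<mu>_def by simp
    also have "X *\<^sub>v (x0 + t \<cdot>\<^sub>v h) = X *\<^sub>v x0 + t \<cdot>\<^sub>v (X *\<^sub>v h)"
      using X x0 h by (simp add: mult_add_distrib_mat_vec[of _ n d] mult_mat_vec[of _ n d])
    finally have "\<mu> * (1 + 2 * t * (x0 \<bullet> h) + t\<^sup>2 * (h \<bullet> h))
        \<le> \<mu> + 2 * t * ((X *\<^sub>v x0) \<bullet> (X *\<^sub>v h)) + t\<^sup>2 * ((X *\<^sub>v h) \<bullet> (X *\<^sub>v h))"
      using scalar_prod_add_smult_self[OF x0(1) h(1)] scalar_prod_add_smult_self[OF Xx0 Xh] x0
      unfolding \<mu>_def by simp
    then show ?thesis by (simp add: algebra_simps)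
  qed
  then show ?thesis
    using linear_coeff_zero_if_quadratic_nonneg unfolding \<mu>_def by fastforce
qed

text \<open>The vector \<open>X\<^sup>T X x0 - \<mu> x0\<close> is orthogonal to \<open>v\<^sup>\<bottom>\<close> by first-order optimality and lies in
  \<open>v\<^sup>\<bottom>\<close> because \<open>X v = 0\<close>, so it vanishes.\<close>

lemma min_rayleigh_gram_eigenvector:
  fixes X :: "real mat" and v x0 :: "real vec"
  assumes X: "X \<in> carrier_mat n d" and v: "v \<in> carrier_vec d" and Xv: "X *\<^sub>v v = 0\<^sub>v n"
    and x0: "x0 \<in> carrier_vec d" "x0 \<bullet> x0 = 1" "v \<bullet> x0 = 0"
    and min: "\<And>x. x \<in> carrier_vec d \<Longrightarrow> v \<bullet> x = 0 \<Longrightarrow>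
       (X *\<^sub>v x0) \<bullet> (X *\<^sub>v x0) * (x \<bullet> x) \<le> (X *\<^sub>v x) \<bullet> (X *\<^sub>v x)"
  shows "(transpose_mat X * X) *\<^sub>v x0 = ((X *\<^sub>v x0) \<bullet> (X *\<^sub>v x0)) \<cdot>\<^sub>v x0"
proof -
  define \<mu> where "\<mu> = (X *\<^sub>v x0) \<bullet> (X *\<^sub>v x0)"
  define g where "g = transpose_mat X *\<^sub>v (X *\<^sub>v x0)"
  define z where "z = g - \<mu> \<cdot>\<^sub>v x0"
  have Xx0: "X *\<^sub>v x0 \<in> carrier_vec n" using X x0 by simp
  have g: "g \<in> carrier_vec d" unfolding g_def using X x0 by simp
  have z: "z \<in> carrier_vec d" unfolding z_def using g x0 by simp
  have z_dot: "z \<bullet> h = (X *\<^sub>v x0) \<bullet> (X *\<^sub>v h) - \<mu> * (x0 \<bullet> h)" if "h \<in> carrier_vec d" for h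
    unfolding z_def g_def using g x0 that transpose_vec_mult_scalar[OF X that Xx0]
    by (simp add: minus_scalar_prod_distrib[of _ d] g_def)
  have "v \<bullet> z = 0"
    using z_dot[OF v] Xv x0 v z Xx0 comm_scalar_prod[OF v z] comm_scalar_prod[OF v x0(1)] by simp
  hence "z \<bullet> z = 0"
    using z_dot[OF z] min_rayleigh_first_order[OF X v x0 min z] unfolding \<mu>_def by simp
  hence "z = 0\<^sub>v d" using scalar_prod_self_eq_0_iff[OF z] by simp
  hence "g = \<mu> \<cdot>\<^sub>v x0" unfolding z_def using g x0 by (intro eq_vecI) (auto simp: vec_eq_iff)
  then show ?thesis unfolding g_def \<mu>_def using X x0 by (simp add: assoc_mult_mat_vec_dims)
qed
lemma gram_eigenvalue_nonneg:
  fixes A :: "real mat"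
  assumes "eigenvalue (transpose_mat A * A) e"
  shows "0 \<le> e"
proof -
  obtain z :: "real vec" where z: "z \<in> carrier_vec (dim_col A)" "z \<noteq> 0\<^sub>v (dim_col A)"
    and Az: "(transpose_mat A * A) *\<^sub>v z = e \<cdot>\<^sub>v z"
    using assms unfolding eigenvalue_def eigenvector_def by auto
  have Az_carrier: "A *\<^sub>v z \<in> carrier_vec (dim_row A)" unfolding carrier_vec_def by simp
  have "e * (z \<bullet> z) = z \<bullet> ((transpose_mat A * A) *\<^sub>v z)" using Az z by simp
  also have "\<dots> = (A *\<^sub>v z) \<bullet> (A *\<^sub>v z)"
    using z Az_carrier transpose_vec_mult_scalar[of "transpose_mat A" "dim_col A" "dim_row A" "A *\<^sub>v z" z]
    by (simp add: assoc_mult_mat_vec_dims)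
  finally have "0 \<le> e * (z \<bullet> z)" using scalar_prod_self_nonneg by metis
  moreover have "z \<bullet> z > 0"
    using z scalar_prod_self_nonneg[of z] scalar_prod_self_eq_0_iff[OF z(1)] by linarith
  ultimately show ?thesis by (simp add: zero_le_mult_iff)
qed

lemma sigma_min_sq_le_eigenvalue:
  fixes A :: "real mat"
  assumes e: "eigenvalue (transpose_mat A * A) e" "e \<noteq> 0"
  shows "(sigma_min A)\<^sup>2 \<le> e"
proof -
  let ?G = "transpose_mat A * A"
  define E where "E = {e. eigenvalue ?G e \<and> e \<noteq> 0}"
  have G: "?G \<in> carrier_mat (dim_col A) (dim_col A)" by (intro carrier_matI) simp_all
  have "char_poly ?G \<noteq> 0" using degree_monic_char_poly[OF G] by auto
  moreover have "E \<subseteq> {x. poly (char_poly ?G) x = 0}"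
    unfolding E_def using eigenvalue_root_char_poly[OF G] by blast
  ultimately have "finite E" by (metis poly_roots_finite finite_subset)
  moreover have "e \<in> E" unfolding E_def using e by simp
  ultimately have "Min E \<in> E" "Min E \<le> e" using Min_in by fastforce+
  moreover have "0 \<le> Min E" using \<open>Min E \<in> E\<close> gram_eigenvalue_nonneg unfolding E_def by blast
  ultimately show ?thesis unfolding sigma_min_def E_def[symmetric] by simp
qed

context line_kernel
begin

lemma exists_gram_eigenvalue_le:
  assumes u: "u \<in> carrier_vec d" "v \<bullet> u = 0" "u \<noteq> 0\<^sub>v d"
  shows "\<exists>e. eigenvalue (transpose_mat X * X) e \<and> e \<noteq> 0 \<and> e * (u \<bullet> u) \<le> (X *\<^sub>v u) \<bullet> (X *\<^sub>v u)"
proof -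
  obtain x0 :: "real vec" where x0: "x0 \<in> carrier_vec d" "x0 \<bullet> x0 = 1" "v \<bullet> x0 = 0"
    and min: "\<And>x. x \<in> carrier_vec d \<Longrightarrow> v \<bullet> x = 0 \<Longrightarrow>
       (X *\<^sub>v x0) \<bullet> (X *\<^sub>v x0) * (x \<bullet> x) \<le> (X *\<^sub>v x) \<bullet> (X *\<^sub>v x)"
    using exists_min_rayleigh_on_orth[OF X_carrier v_carrier u] by blast
  define \<mu> where "\<mu> = (X *\<^sub>v x0) \<bullet> (X *\<^sub>v x0)"
  have "x0 \<noteq> 0\<^sub>v d" using x0 by auto
  hence "eigenvector (transpose_mat X * X) x0 \<mu>"
    using min_rayleigh_gram_eigenvector[OF X_carrier v_carrier mult_v_eq_0 x0 min] x0 X_carrier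
    unfolding eigenvector_def \<mu>_def by simp
  moreover have "\<mu> \<noteq> 0"
  proof
    assume "\<mu> = 0"
    hence "X *\<^sub>v x0 = 0\<^sub>v n"
      unfolding \<mu>_def using X_carrier x0 scalar_prod_self_eq_0_iff[of "X *\<^sub>v x0" n] by simp
    then obtain c where "x0 = c \<cdot>\<^sub>v v" using kernel_iff x0 by blast
    then show False using x0 v_carrier v_unit by simp
  qed
  ultimately show ?thesis using min[OF u(1,2)] unfolding eigenvalue_def \<mu>_def by blast
qed

lemma sigma_min_sq_mult_le:
  assumes x: "x \<in> carrier_vec d"
  shows "(sigma_min X)\<^sup>2 * (x \<bullet> x - (v \<bullet> x)\<^sup>2) \<le> (X *\<^sub>v x) \<bullet> (X *\<^sub>v x)"
proof -
  define u where "u = x - (v \<bullet> x) \<cdot>\<^sub>v v"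
  have u: "u \<in> carrier_vec d" "v \<bullet> u = 0" "u \<bullet> u = x \<bullet> x - (v \<bullet> x)\<^sup>2"
    unfolding u_def using x v_carrier v_unit scalar_prod_orth_residual sq_norm_orth_residual by auto
  have "X *\<^sub>v u = X *\<^sub>v x" unfolding u_def by (rule mult_minus_smult_v[OF x])
  moreover have "(sigma_min X)\<^sup>2 * (u \<bullet> u) \<le> (X *\<^sub>v u) \<bullet> (X *\<^sub>v u)"
  proof (cases "u = 0\<^sub>v d")
    case True then show ?thesis using scalar_prod_self_nonneg by simp
  next
    case False
    then obtain e where e: "eigenvalue (transpose_mat X * X) e" "e \<noteq> 0"
      and le: "e * (u \<bullet> u) \<le> (X *\<^sub>v u) \<bullet> (X *\<^sub>v u)"
      using exists_gram_eigenvalue_le[OF u(1,2)] by blast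
    have "(sigma_min X)\<^sup>2 * (u \<bullet> u) \<le> e * (u \<bullet> u)"
      using sigma_min_sq_le_eigenvalue[OF e] scalar_prod_self_nonneg by (rule mult_right_mono)
    then show ?thesis using le by linarith
  qed
  ultimately show ?thesis using u by simp
qed

end

subsection \<open>The error of the projection iterates\<close>

locale line_kernel_tasks =
  fixes d :: nat and X :: "nat \<Rightarrow> real mat" and y :: "nat \<Rightarrow> real vec" and \<tau> :: "nat \<Rightarrow> nat"
    and v :: "nat \<Rightarrow> real vec" and w :: "real vec"
  assumes line_kernel: "\<And>t. 1 \<le> t \<Longrightarrow> line_kernel (X (\<tau> t)) (dim_row (X (\<tau> t))) d (v (\<tau> t))"
    and w_carrier: "w \<in> carrier_vec d"
    and solves: "\<And>t. 1 \<le> t \<Longrightarrow> X (\<tau> t) *\<^sub>v w = y (\<tau> t)"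
begin

lemma iterate_carrier: "iterate d X y \<tau> t \<in> carrier_vec d"
proof (induction t)
  case (Suc t)
  have "pinv (X (\<tau> (Suc t))) \<in> carrier_mat d (dim_row (X (\<tau> (Suc t))))"
    using line_kernel.pinv_carrier[OF line_kernel] by simp
  then show ?case unfolding carrier_vec_def by simp
qed simp

lemma iterate_error_step:
  "iterate d X y \<tau> (Suc t) - w = (v (\<tau> (Suc t)) \<bullet> (iterate d X y \<tau> t - w)) \<cdot>\<^sub>v v (\<tau> (Suc t))"
proof -
  let ?m = "\<tau> (Suc t)" and ?x = "iterate d X y \<tau> t"
  interpret L: line_kernel "X ?m" "dim_row (X ?m)" d "v ?m" using line_kernel by simp
  have x: "?x \<in> carrier_vec d" by (rule iterate_carrier)
  have "y ?m - X ?m *\<^sub>v ?x = X ?m *\<^sub>v (w - ?x)"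
    using solves[of "Suc t"] L.X_carrier x w_carrier by (simp add: mult_minus_distrib_mat_vec)
  hence "iterate d X y \<tau> (Suc t) = ?x + ((w - ?x) - (v ?m \<bullet> (w - ?x)) \<cdot>\<^sub>v v ?m)"
    using L.pinv_mult_mult_vec[of "w - ?x"] x w_carrier by simp
  moreover have "v ?m \<bullet> (w - ?x) = - (v ?m \<bullet> (?x - w))"
    using L.v_carrier x w_carrier by (simp add: scalar_prod_minus_distrib[of _ d])
  ultimately show ?thesis using x w_carrier L.v_carrier by (intro eq_vecI) auto
qed

lemma iterate_error:
  assumes "1 \<le> t"
  shows "\<exists>a. iterate d X y \<tau> t - w = a \<cdot>\<^sub>v v (\<tau> t) \<and>
    a\<^sup>2 = (v (\<tau> 1) \<bullet> w)\<^sup>2 * (\<Prod>i = 1..t - 1. (v (\<tau> i) \<bullet> v (\<tau> (Suc i)))\<^sup>2)"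
  using assms
proof (induction t rule: dec_induct)
  case base
  have "v (\<tau> 1) \<bullet> (0\<^sub>v d - w) = - (v (\<tau> 1) \<bullet> w)"
    using line_kernel.v_carrier[OF line_kernel[of 1]] w_carrier
    by (simp add: scalar_prod_minus_distrib[of _ d])
  then show ?case using iterate_error_step[of 0] by auto
next
  case (step t)
  then obtain a where a: "iterate d X y \<tau> t - w = a \<cdot>\<^sub>v v (\<tau> t)"
    and a2: "a\<^sup>2 = (v (\<tau> 1) \<bullet> w)\<^sup>2 * (\<Prod>i = 1..t - 1. (v (\<tau> i) \<bullet> v (\<tau> (Suc i)))\<^sup>2)"
    by blast
  have carriers: "v (\<tau> t) \<in> carrier_vec d" "v (\<tau> (Suc t)) \<in> carrier_vec d"
    using line_kernel.v_carrier[OF line_kernel] step(1) by auto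
  have "v (\<tau> (Suc t)) \<bullet> (a \<cdot>\<^sub>v v (\<tau> t)) = a * (v (\<tau> t) \<bullet> v (\<tau> (Suc t)))"
    using carriers by (simp add: comm_scalar_prod[of _ d])
  moreover have "(\<Prod>i = 1..Suc t - 1. (v (\<tau> i) \<bullet> v (\<tau> (Suc i)))\<^sup>2) =
      (v (\<tau> t) \<bullet> v (\<tau> (Suc t)))\<^sup>2 * (\<Prod>i = 1..t - 1. (v (\<tau> i) \<bullet> v (\<tau> (Suc i)))\<^sup>2)"
  proof -
    have "{1..Suc t - 1} = insert t {1..t - 1}" using step(1) by auto
    then show ?thesis using step(1) by simp
  qed
  ultimately show ?case
    using iterate_error_step[of t] a a2
    by (intro exI[of _ "a * (v (\<tau> t) \<bullet> v (\<tau> (Suc t)))"]) (simp add: power_mult_distrib)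
qed

lemma task_residual_lower_bound:
  assumes "1 \<le> t" and x: "x \<in> carrier_vec d"
  shows "(sigma_min (X (\<tau> t)))\<^sup>2 * ((x - w) \<bullet> (x - w) - (v (\<tau> t) \<bullet> (x - w))\<^sup>2)
    \<le> (vnorm (X (\<tau> t) *\<^sub>v x - y (\<tau> t)))\<^sup>2"
proof -
  interpret L: line_kernel "X (\<tau> t)" "dim_row (X (\<tau> t))" d "v (\<tau> t)" using line_kernel assms by simp
  have "X (\<tau> t) *\<^sub>v x - y (\<tau> t) = X (\<tau> t) *\<^sub>v (x - w)"
    using solves[OF assms(1)] L.X_carrier x w_carrier by (simp add: mult_minus_distrib_mat_vec)
  then show ?thesis using L.sigma_min_sq_mult_le[of "x - w"] x w_carrier by (simp add: vnorm_sq)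
qed

lemma iterate_residual_lower_bound:
  assumes t: "1 \<le> t" and k: "1 \<le> k" and a: "iterate d X y \<tau> k - w = a \<cdot>\<^sub>v v (\<tau> k)"
    and c: "c \<le> (sigma_min (X (\<tau> t)))\<^sup>2"
  shows "c * a\<^sup>2 * (1 - (v (\<tau> t) \<bullet> v (\<tau> k))\<^sup>2) \<le> (vnorm (X (\<tau> t) *\<^sub>v iterate d X y \<tau> k - y (\<tau> t)))\<^sup>2"
proof -
  interpret Lt: line_kernel "X (\<tau> t)" "dim_row (X (\<tau> t))" d "v (\<tau> t)" using line_kernel t by simp
  interpret Lk: line_kernel "X (\<tau> k)" "dim_row (X (\<tau> k))" d "v (\<tau> k)" using line_kernel k by simp
  have "(a \<cdot>\<^sub>v v (\<tau> k)) \<bullet> (a \<cdot>\<^sub>v v (\<tau> k)) - (v (\<tau> t) \<bullet> (a \<cdot>\<^sub>v v (\<tau> k)))\<^sup>2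
      = a\<^sup>2 * (1 - (v (\<tau> t) \<bullet> v (\<tau> k))\<^sup>2)"
    using Lt.v_carrier Lk.v_carrier Lk.v_unit
    by (simp add: scalar_prod_smult_self power_mult_distrib algebra_simps)
  moreover have "0 \<le> a\<^sup>2 * (1 - (v (\<tau> t) \<bullet> v (\<tau> k))\<^sup>2)"
    using sq_scalar_prod_unit_le[OF Lt.v_carrier Lk.v_carrier Lt.v_unit] Lk.v_unit by simp
  ultimately show ?thesis
    using task_residual_lower_bound[OF t iterate_carrier] a mult_right_mono[OF c] by (smt (verit) mult.assoc)
qed

end

lemma in_S_T_line_kernel_tasks:
  assumes S: "in_S_T d T X y"
    and v: "\<forall>m \<in> {1..T}. v m \<in> carrier_vec d \<and> vnorm (v m) = 1 \<and>
              (\<forall>x \<in> carrier_vec d. X m *\<^sub>v x = 0\<^sub>v (dim_row (X m)) \<longleftrightarrow> (\<exists>c. x = c \<cdot>\<^sub>v v m))"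
    and tau: "\<forall>t \<ge> 1. \<tau> t \<in> {1..T}"
    and ws: "is_min_norm_sol d T X y wstar"
  shows "line_kernel_tasks d X y \<tau> v wstar"
proof (rule line_kernel_tasks.intro)
  fix t :: nat assume "1 \<le> t"
  hence m: "\<tau> t \<in> {1..T}" using tau by blast
  show "line_kernel (X (\<tau> t)) (dim_row (X (\<tau> t))) d (v (\<tau> t))"
  proof (rule line_kernel.intro)
    show "X (\<tau> t) \<in> carrier_mat (dim_row (X (\<tau> t))) d"
      using S m unfolding in_S_T_def carrier_mat_def by auto
    show "v (\<tau> t) \<bullet> v (\<tau> t) = 1" using v m vnorm_sq[of "v (\<tau> t)"] by auto
  qed (use v m in auto)
  show "X (\<tau> t) *\<^sub>v wstar = y (\<tau> t)" using ws m unfolding is_min_norm_sol_def by blast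
next
  show "wstar \<in> carrier_vec d" using ws unfolding is_min_norm_sol_def by blast
qed

theorem mainTheorem10:
  fixes d T k :: nat and X :: "nat \<Rightarrow> real mat" and y v :: "nat \<Rightarrow> real vec"
    and \<tau> :: "nat \<Rightarrow> nat" and \<theta> :: "nat \<Rightarrow> nat \<Rightarrow> real" and wstar :: "real vec"
  assumes "d \<ge> 1" and "T \<ge> 1"
    and S: "in_S_T d T X y"
    and rk: "\<forall>m \<in> {1..T}. mrank (X m) = d - 1"
    and v: "\<forall>m \<in> {1..T}. v m \<in> carrier_vec d \<and> vnorm (v m) = 1 \<and>
              (\<forall>x \<in> carrier_vec d. X m *\<^sub>v x = 0\<^sub>v (dim_row (X m)) \<longleftrightarrow> (\<exists>c. x = c \<cdot>\<^sub>v v m))"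
    and tau: "\<forall>t \<ge> 1. \<tau> t \<in> {1..T}"
    and "k \<ge> 2"
    and th: "\<forall>i \<in> {1..k}. \<forall>j \<in> {1..k}. 0 \<le> \<theta> i j \<and> \<theta> i j \<le> pi / 2 \<and>
              (cos (\<theta> i j))^2 = (v (\<tau> i) \<bullet> v (\<tau> j))^2"
    and ws: "is_min_norm_sol d T X y wstar"
  shows "forgetting d X y \<tau> k \<ge>
    (Min ((\<lambda>m. (sigma_min (X m))^2) ` {1..T})) * (v (\<tau> 1) \<bullet> wstar)^2 * (1 / real k) *
    (\<Prod>i = 1..k-1. (cos (\<theta> i (i+1)))^2) * (\<Sum>j = 1..k-1. 1 - (cos (\<theta> j k))^2)"
proof -
  \<comment> \<open>The rank condition (implied by the kernel description), the norm bounds and the range of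
    \<open>\<theta>\<close> are not needed, and \<open>wstar\<close> may be any common solution.\<close>
  interpret line_kernel_tasks d X y \<tau> v wstar by (rule in_S_T_line_kernel_tasks[OF S v tau ws])
  define Mn where "Mn = Min ((\<lambda>m. (sigma_min (X m))\<^sup>2) ` {1..T})"
  define r where "r t = (vnorm (X (\<tau> t) *\<^sub>v iterate d X y \<tau> k - y (\<tau> t)))\<^sup>2" for t
  obtain a :: real where a: "iterate d X y \<tau> k - wstar = a \<cdot>\<^sub>v v (\<tau> k)"
    and a2: "a\<^sup>2 = (v (\<tau> 1) \<bullet> wstar)\<^sup>2 * (\<Prod>i = 1..k - 1. (v (\<tau> i) \<bullet> v (\<tau> (Suc i)))\<^sup>2)"
    using iterate_error[of k] \<open>k \<ge> 2\<close> by auto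
  have "Mn * a\<^sup>2 * (1 - (v (\<tau> t) \<bullet> v (\<tau> k))\<^sup>2) \<le> r t" if "t \<in> {1..k - 1}" for t
    using that tau \<open>k \<ge> 2\<close> unfolding Mn_def r_def
    by (intro iterate_residual_lower_bound[OF _ _ a] Min_le) auto
  hence "Mn * a\<^sup>2 * (\<Sum>j = 1..k - 1. 1 - (v (\<tau> j) \<bullet> v (\<tau> k))\<^sup>2) \<le> (\<Sum>t = 1..k - 1. r t)"
    unfolding sum_distrib_left by (rule sum_mono)
  also have "\<dots> \<le> (\<Sum>t = 1..k. r t)" unfolding r_def by (intro sum_mono2) auto
  finally have "Mn * a\<^sup>2 * (\<Sum>j = 1..k - 1. 1 - (v (\<tau> j) \<bullet> v (\<tau> k))\<^sup>2) / k \<le> forgetting d X y \<tau> k"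
    unfolding forgetting_def r_def by (simp add: divide_right_mono)
  moreover have "(\<Prod>i = 1..k - 1. (cos (\<theta> i (i + 1)))\<^sup>2) = (\<Prod>i = 1..k - 1. (v (\<tau> i) \<bullet> v (\<tau> (Suc i)))\<^sup>2)"
    and "(\<Sum>j = 1..k - 1. 1 - (cos (\<theta> j k))\<^sup>2) = (\<Sum>j = 1..k - 1. 1 - (v (\<tau> j) \<bullet> v (\<tau> k))\<^sup>2)"
    using th by (auto intro!: prod.cong sum.cong)
  ultimately show ?thesis unfolding Mn_def[symmetric] a2 by (simp add: mult_ac)
qed

end
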